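(* Let $C\in\mathbb{N}$, $\mathbf{c}\in\mathbb{R}^C$, $\mathbf{n}\in\mathbb{N}^C$, $\boldsymbol{\mu}\in\mathbb{R}^C$, and let $$\mathrm{sb}(\theta;\mathbf{c},\mathbf{n},\boldsymbol{\mu})=\frac{1}{B}\sum_{i=1}^C c_i\cos(n_i(\theta-\mu_i))+\frac{A}{B},\quad A=\sum_{i=1}^C|c_i|,\quad B=2\pi\Big(\sum_{i=1}^C|c_i|+\sum_{i:n_i=0}c_i\Big),$$ be the spectrally bounded probability density on angles $\theta\in[-\pi,\pi)$ (identified with the unit circle $\mathbb{S}^1$ with geodesic distance). Consider a unit circle geometric graph with $N$ nodes sampled i.i.d. according to this angular density and constant neighborhood radius $\alpha$ (two nodes adjacent iff their geodesic distance is at most $\alpha$). Then the expected degree of a node at angle $\theta$ (i.e. $N$ times the probability under this density of the geodesic ball of radius $\alpha$ about $\theta$) is $$\deg(\theta)=\frac{2N}{B}\Big(\sum_{i:n_i\ne0}\frac{c_i}{n_i}\cos(n_i(\theta-\mu_i))\sin(n_i\alpha)+\Big(\sum_{i:n_i=0}c_i+A\Big)\alpha\Big),$$ and the expected average degree of the graph (the expectation of $\deg(\theta)$ for $\theta$ distributed with density $\mathrm{sb}$) is $$\mathbb{E}[\deg(\theta)]=\frac{2\pi N\alpha}{B^2}\Big(\sum_{i:n_i\ne0}\ \sum_{j:n_j=n_i}c_ic_j\cos(n_i(\mu_i-\mu_j))\frac{\sin(n_i\alpha)}{n_i\alpha}+2\Big(\sum_{i:n_i=0}c_i+A\Big)^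2\Big).$$
   Context: Here $\mathbb{N}$ includes $0$ (the indices with $n_i=0$ contribute constant terms). The function $\mathrm{sb}$ is a continuous, $2\pi$-periodic probability density. *)

theory Defs
  imports "HOL-Analysis.Analysis"
begin

definition sbA :: "nat \<Rightarrow> (nat \<Rightarrow> real) \<Rightarrow> real" where
  "sbA C c = (\<Sum>i\<in>{1..C}. \<bar>c i\<bar>)"

definition sbB :: "nat \<Rightarrow> (nat \<Rightarrow> real) \<Rightarrow> (nat \<Rightarrow> nat) \<Rightarrow> real" where
  "sbB C c n = 2 * pi * ((\<Sum>i\<in>{1..C}. \<bar>c i\<bar>) + (\<Sum>i\<in>{i\<in>{1..C}. n i = 0}. c i))"

definition sb :: "nat \<Rightarrow> (nat \<Rightarrow> real) \<Rightarrow> (nat \<Rightarrow> nat) \<Rightarrow> (nat \<Rightarrow> real) \<Rightarrow> real \<Rightarrow> real" where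
  "sb C c n mu \<theta> =
     (1 / sbB C c n) * (\<Sum>i\<in>{1..C}. c i * cos (real (n i) * (\<theta> - mu i))) + sbA C c / sbB C c n"

definition sb_measure :: "nat \<Rightarrow> (nat \<Rightarrow> real) \<Rightarrow> (nat \<Rightarrow> nat) \<Rightarrow> (nat \<Rightarrow> real) \<Rightarrow> real measure" where
  "sb_measure C c n mu =
     density lborel (\<lambda>t. ennreal (indicator {-pi..<pi} t * sb C c n mu t))"

definition circ_dist :: "real \<Rightarrow> real \<Rightarrow> real" where
  "circ_dist s t = arccos (cos (s - t))"

definition exp_degree :: "nat \<Rightarrow> nat \<Rightarrow> (nat \<Rightarrow> real) \<Rightarrow> (nat \<Rightarrow> nat) \<Rightarrow> (nat \<Rightarrow> real) \<Rightarrow> real \<Rightarrow> real \<Rightarrow> real" where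
  "exp_degree N C c n mu \<alpha> \<theta> =
     real N * measure (sb_measure C c n mu) {t. circ_dist \<theta> t \<le> \<alpha>}"

end

theory Submission
  imports Defs
begin

text \<open>
  The density is \<open>sb = (cos_sum + A) / B\<close>, whose primitive \<open>F\<close> is built from
  \<open>sin (n (x - \<mu>)) / n\<close> (and \<open>x\<close> for \<open>n = 0\<close>); the normalisation \<open>B\<close> makes \<open>F\<close> grow by
  exactly 1 per period. Modulo \<open>2\<pi>\<close> the geodesic ball of radius \<open>\<alpha>\<close> about \<open>\<theta>\<close> is the interval
  \<open>[\<theta> - \<alpha>, \<theta> + \<alpha>]\<close>; where it wraps around \<open>\<plusminus>\<pi>\<close> it splits into two intervals of \<open>[-\<pi>, \<pi>]\<close>
  whose integrals still add up to \<open>F (\<theta> + \<alpha>) - F (\<theta> - \<alpha>)\<close>, and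
  \<open>sin (x + y) - sin (x - y) = 2 cos x sin y\<close> turns this into the closed form for the degree.
  The average degree is the integral over one period of \<open>sb\<close> times this trigonometric polynomial;
  by the orthogonality of \<open>cos (n (x - a))\<close> and \<open>cos (m (x - b))\<close> on \<open>[-\<pi>, \<pi>]\<close> only the
  pairs of equal frequency and the constant terms survive.
\<close>

lemma has_integral_cos_affine:
  fixes k \<phi> a b :: real
  assumes "k \<noteq> 0" "a \<le> b"
  shows "((\<lambda>x. cos (k * x + \<phi>)) has_integral (sin (k * b + \<phi>) - sin (k * a + \<phi>)) / k) {a..b}"
proof -
  have "((\<lambda>x. sin (k * x + \<phi>) / k) has_vector_derivative cos (k * x + \<phi>)) (at x within {a..b})" for x
    using assms(1)
    by (auto intro!: derivative_eq_intros simp flip: has_real_derivative_iff_has_vector_derivative)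
  from fundamental_theorem_of_calculus[OF assms(2) this]
  show ?thesis by (simp add: diff_divide_distrib)
qed

lemma has_integral_cos_int_period:
  fixes k :: int and \<phi> :: real
  shows "((\<lambda>x. cos (of_int k * x + \<phi>)) has_integral (if k = 0 then 2 * pi * cos \<phi> else 0)) {-pi..pi}"
proof (cases "k = 0")
  case True
  then show ?thesis using has_integral_const_real[of "cos \<phi>" "-pi" pi] by simp
next
  case False
  have "sin (of_int k * pi + \<phi>) = sin (of_int k * (-pi) + \<phi> + of_int k * (2 * pi))"
    by (simp add: algebra_simps)
  also have "\<dots> = sin (of_int k * (-pi) + \<phi>)"
    by (rule sin.plus_of_int[where 'a=real, simplified])
  finally show ?thesis
    using has_integral_cos_affine[of "of_int k" "-pi" pi \<phi>] False by simp
qed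

lemma has_integral_cos_times_cos:
  fixes n m :: nat and a b :: real
  shows "((\<lambda>x. cos (real n * (x - a)) * cos (real m * (x - b))) has_integral
     (if n = m then (if n = 0 then 2 * pi else pi * cos (real n * (a - b))) else 0)) {-pi..pi}"
proof -
  define \<phi> where "\<phi> = real m * b - real n * a"
  define \<psi> where "\<psi> = - (real n * a) - real m * b"
  have product_to_sum: "cos (real n * (x - a)) * cos (real m * (x - b)) =
     cos (of_int (int n - int m) * x + \<phi>) / 2 + cos (of_int (int n + int m) * x + \<psi>) / 2" for x
    unfolding cos_times_cos \<phi>_def \<psi>_def by (simp add: algebra_simps add_divide_distrib)
  have "((\<lambda>x. cos (of_int (int n - int m) * x + \<phi>) / 2 + cos (of_int (int n + int m) * x + \<psi>) / 2)
     has_integral ((if int n - int m = 0 then 2 * pi * cos \<phi> else 0) / 2 +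
                   (if int n + int m = 0 then 2 * pi * cos \<psi> else 0) / 2)) {-pi..pi}"
    by (intro has_integral_add has_integral_divide has_integral_cos_int_period)
  moreover have "cos \<phi> = cos (real n * (a - b))" if "n = m"
    using that unfolding \<phi>_def by (metis cos_minus minus_diff_eq right_diff_distrib)
  ultimately show ?thesis
    unfolding product_to_sum by (auto simp: \<psi>_def)
qed

definition cos_sum :: "nat set \<Rightarrow> (nat \<Rightarrow> real) \<Rightarrow> (nat \<Rightarrow> nat) \<Rightarrow> (nat \<Rightarrow> real) \<Rightarrow> real \<Rightarrow> real" where
  "cos_sum I a n mu x = (\<Sum>i\<in>I. a i * cos (real (n i) * (x - mu i)))"

lemma has_integral_cos_sum:
  assumes "finite I"
  shows "(cos_sum I a n mu has_integral 2 * pi * (\<Sum>i\<in>{i\<in>I. n i = 0}. a i)) {-pi..pi}"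
proof -
  have "((\<lambda>x. cos (real (n i) * (x - mu i))) has_integral (if n i = 0 then 2 * pi else 0)) {-pi..pi}" for i
    using has_integral_cos_times_cos[of "n i" "mu i" 0 0] by (cases "n i = 0") simp_all
  then have "(cos_sum I a n mu has_integral (\<Sum>i\<in>I. a i * (if n i = 0 then 2 * pi else 0))) {-pi..pi}"
    unfolding cos_sum_def[abs_def] by (intro has_integral_sum has_integral_mult_right assms)
  moreover have "(\<Sum>i\<in>I. a i * (if n i = 0 then 2 * pi else 0)) = 2 * pi * (\<Sum>i\<in>{i\<in>I. n i = 0}. a i)"
    using assms by (simp add: sum.inter_filter sum_distrib_left) (auto intro!: sum.cong)
  ultimately show ?thesis by simp
qed

lemma has_integral_cos_sum_times_cos_sum:
  assumes "finite I" "finite J" and nonconstant: "\<And>i. i \<in> J \<Longrightarrow> n i \<noteq> 0"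
  shows "((\<lambda>x. cos_sum I a n mu x * cos_sum J b n mu x) has_integral
     pi * (\<Sum>i\<in>J. \<Sum>j\<in>{j\<in>I. n j = n i}. b i * a j * cos (real (n i) * (mu i - mu j)))) {-pi..pi}"
proof -
  define L where "L j i =
    (if n j = n i then (if n j = 0 then 2 * pi else pi * cos (real (n j) * (mu j - mu i))) else 0)" for j i
  have "cos_sum I a n mu x * cos_sum J b n mu x =
      (\<Sum>j\<in>I. \<Sum>i\<in>J. a j * b i * (cos (real (n j) * (x - mu j)) * cos (real (n i) * (x - mu i))))" for x
    unfolding cos_sum_def sum_product by (intro sum.cong refl) (simp add: algebra_simps)
  moreover have "((\<lambda>x. \<Sum>j\<in>I. \<Sum>i\<in>J. a j * b i * (cos (real (n j) * (x - mu j)) * cos (real (n i) * (x - mu i))))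
      has_integral (\<Sum>j\<in>I. \<Sum>i\<in>J. a j * b i * L j i)) {-pi..pi}"
    unfolding L_def
    by (intro has_integral_sum has_integral_mult_right has_integral_cos_times_cos assms)
  moreover have "(\<Sum>j\<in>I. \<Sum>i\<in>J. a j * b i * L j i) =
      pi * (\<Sum>i\<in>J. \<Sum>j\<in>{j\<in>I. n j = n i}. b i * a j * cos (real (n i) * (mu i - mu j)))"
  proof -
    have cos_swap: "cos (x * (u - v)) = cos (x * (v - u))" for x u v :: real
      by (metis cos_minus minus_diff_eq mult_minus_right)
    have "a j * b i * L j i = (if n j = n i then pi * (b i * a j * cos (real (n i) * (mu i - mu j))) else 0)"
      if "i \<in> J" for i j
      using nonconstant[OF that] cos_swap unfolding L_def by auto
    then have "(\<Sum>j\<in>I. \<Sum>i\<in>J. a j * b i * L j i) =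
        (\<Sum>i\<in>J. \<Sum>j\<in>I. if n j = n i then pi * (b i * a j * cos (real (n i) * (mu i - mu j))) else 0)"
      by (subst sum.swap) (intro sum.cong refl; simp)
    then show ?thesis
      using assms(1) by (simp add: sum.inter_filter sum_distrib_left) (auto intro!: sum.cong)
  qed
  ultimately show ?thesis by simp
qed

definition cos_primitive :: "nat \<Rightarrow> real \<Rightarrow> real \<Rightarrow> real" where
  "cos_primitive m mu x = (if m = 0 then x else sin (real m * (x - mu)) / real m)"

lemma has_integral_cos_primitive:
  assumes "a \<le> b"
  shows "((\<lambda>x. cos (real m * (x - mu))) has_integral cos_primitive m mu b - cos_primitive m mu a) {a..b}"
proof (cases "m = 0")
  case True
  then show ?thesis using has_integral_const_real[of "1::real" a b] assms by (simp add: cos_primitive_def)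
next
  case False
  have "(\<lambda>x. cos (real m * (x - mu))) = (\<lambda>x. cos (real m * x + - real m * mu))"
    by (simp add: algebra_simps)
  with has_integral_cos_affine[of "real m" a b "- real m * mu"] False assms show ?thesis
    by (simp add: cos_primitive_def algebra_simps diff_divide_distrib)
qed

lemma cos_primitive_add_period:
  "cos_primitive m mu (x + 2 * pi) = cos_primitive m mu x + (if m = 0 then 2 * pi else 0)"
proof -
  have "sin (real m * (x + 2 * pi - mu)) = sin (real m * (x - mu) + real m * (2 * pi))"
    by (simp add: algebra_simps)
  then show ?thesis
    using sin.plus_of_nat[where 'a=real, simplified]
    by (simp add: cos_primitive_def)
qed

lemma cos_primitive_diff_symmetric:
  "cos_primitive m mu (\<theta> + \<alpha>) - cos_primitive m mu (\<theta> - \<alpha>) =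
     (if m = 0 then 2 * \<alpha> else 2 / real m * cos (real m * (\<theta> - mu)) * sin (real m * \<alpha>))"
proof -
  have "sin (real m * (\<theta> + \<alpha> - mu)) - sin (real m * (\<theta> - \<alpha> - mu)) =
        sin (real m * (\<theta> - mu) + real m * \<alpha>) - sin (real m * (\<theta> - mu) - real m * \<alpha>)"
    by (simp add: algebra_simps)
  also have "\<dots> = 2 * cos (real m * (\<theta> - mu)) * sin (real m * \<alpha>)"
    by (simp add: sin_add sin_diff)
  finally show ?thesis
    by (simp add: cos_primitive_def diff_divide_distrib[symmetric])
qed

definition cos_sum_primitive :: "nat set \<Rightarrow> (nat \<Rightarrow> real) \<Rightarrow> (nat \<Rightarrow> nat) \<Rightarrow> (nat \<Rightarrow> real) \<Rightarrow> real \<Rightarrow> real" where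
  "cos_sum_primitive I a n mu x = (\<Sum>i\<in>I. a i * cos_primitive (n i) (mu i) x)"

lemma has_integral_cos_sum_primitive:
  assumes "finite I" "a \<le> b"
  shows "(cos_sum I c n mu has_integral cos_sum_primitive I c n mu b - cos_sum_primitive I c n mu a) {a..b}"
proof -
  have "(cos_sum I c n mu has_integral (\<Sum>i\<in>I. c i * (cos_primitive (n i) (mu i) b - cos_primitive (n i) (mu i) a))) {a..b}"
    unfolding cos_sum_def[abs_def]
    by (intro has_integral_sum has_integral_mult_right has_integral_cos_primitive assms)
  then show ?thesis
    by (simp add: cos_sum_primitive_def right_diff_distrib sum_subtractf)
qed

lemma cos_sum_primitive_add_period:
  assumes "finite I"
  shows "cos_sum_primitive I a n mu (x + 2 * pi) =
           cos_sum_primitive I a n mu x + 2 * pi * (\<Sum>i\<in>{i\<in>I. n i = 0}. a i)"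
  using assms
  by (simp add: cos_sum_primitive_def cos_primitive_add_period distrib_left sum.distrib
                sum.inter_filter sum_distrib_left) (auto intro!: sum.cong)

lemma cos_sum_primitive_diff_symmetric:
  assumes "finite I"
  shows "cos_sum_primitive I a n mu (\<theta> + \<alpha>) - cos_sum_primitive I a n mu (\<theta> - \<alpha>) =
           2 * ((\<Sum>i\<in>{i\<in>I. n i \<noteq> 0}. a i / real (n i) * cos (real (n i) * (\<theta> - mu i)) * sin (real (n i) * \<alpha>))
                + (\<Sum>i\<in>{i\<in>I. n i = 0}. a i) * \<alpha>)"
proof -
  have "cos_sum_primitive I a n mu (\<theta> + \<alpha>) - cos_sum_primitive I a n mu (\<theta> - \<alpha>) =
      (\<Sum>i\<in>I. if n i = 0 then 2 * (a i * \<alpha>)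
               else 2 * (a i / real (n i) * cos (real (n i) * (\<theta> - mu i)) * sin (real (n i) * \<alpha>)))"
    unfolding cos_sum_primitive_def sum_subtractf[symmetric] right_diff_distrib[symmetric]
    by (intro sum.cong refl) (simp add: cos_primitive_diff_symmetric)
  then show ?thesis
    using assms
    by (simp add: sum.If_cases sum_distrib_left sum_distrib_right distrib_left
                  Int_def Collect_conj_eq[symmetric] conj_commute add.commute)
qed

lemma sbB_nonneg: "0 \<le> sbB C c n"
proof -
  have "- (\<Sum>i\<in>{i\<in>{1..C}. n i = 0}. c i) \<le> (\<Sum>i\<in>{i\<in>{1..C}. n i = 0}. \<bar>c i\<bar>)"
    using sum_abs[of c "{i\<in>{1..C}. n i = 0}"] by linarith
  also have "\<dots> \<le> (\<Sum>i\<in>{1..C}. \<bar>c i\<bar>)"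
    by (intro sum_mono2) auto
  finally show ?thesis
    unfolding sbB_def by simp
qed

lemma sb_eq_cos_sum: "sb C c n mu x = (cos_sum {1..C} c n mu x + sbA C c) / sbB C c n"
  by (simp add: sb_def cos_sum_def add_divide_distrib)

lemma sb_nonneg: "0 \<le> sb C c n mu x"
proof -
  have "\<bar>cos_sum {1..C} c n mu x\<bar> \<le> (\<Sum>i\<in>{1..C}. \<bar>c i * cos (real (n i) * (x - mu i))\<bar>)"
    unfolding cos_sum_def by (rule sum_abs)
  also have "\<dots> \<le> sbA C c"
    unfolding sbA_def by (intro sum_mono) (simp add: abs_mult mult_left_le)
  finally show ?thesis
    unfolding sb_eq_cos_sum using sbB_nonneg by simp
qed

definition sb_primitive :: "nat \<Rightarrow> (nat \<Rightarrow> real) \<Rightarrow> (nat \<Rightarrow> nat) \<Rightarrow> (nat \<Rightarrow> real) \<Rightarrow> real \<Rightarrow> real" where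
  "sb_primitive C c n mu x = (cos_sum_primitive {1..C} c n mu x + sbA C c * x) / sbB C c n"

lemma has_integral_sb:
  assumes "a \<le> b"
  shows "(sb C c n mu has_integral sb_primitive C c n mu b - sb_primitive C c n mu a) {a..b}"
proof -
  have "((\<lambda>x. (cos_sum {1..C} c n mu x + sbA C c) / sbB C c n) has_integral
      ((cos_sum_primitive {1..C} c n mu b - cos_sum_primitive {1..C} c n mu a) + sbA C c * (b - a)) / sbB C c n) {a..b}"
    using has_integral_const_real[of "sbA C c" a b] assms
    by (intro has_integral_divide has_integral_add has_integral_cos_sum_primitive) (auto simp: mult.commute)
  then show ?thesis
    unfolding sb_eq_cos_sum[abs_def] sb_primitive_def by (simp add: diff_divide_distrib algebra_simps)
qed

lemma sb_primitive_add_period: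
  assumes "sbB C c n \<noteq> 0"
  shows "sb_primitive C c n mu (x + 2 * pi) = sb_primitive C c n mu x + 1"
proof -
  have "sbB C c n = 2 * pi * ((\<Sum>i\<in>{i\<in>{1..C}. n i = 0}. c i) + sbA C c)"
    by (simp add: sbB_def sbA_def algebra_simps)
  with assms show ?thesis
    unfolding sb_primitive_def cos_sum_primitive_add_period[OF finite_atLeastAtMost]
    by (simp add: field_simps)
qed

lemma sb_primitive_diff_symmetric:
  "sb_primitive C c n mu (\<theta> + \<alpha>) - sb_primitive C c n mu (\<theta> - \<alpha>) =
     2 / sbB C c n *
       ((\<Sum>i\<in>{i\<in>{1..C}. n i \<noteq> 0}. c i / real (n i) * cos (real (n i) * (\<theta> - mu i)) * sin (real (n i) * \<alpha>))
        + ((\<Sum>i\<in>{i\<in>{1..C}. n i = 0}. c i) + sbA C c) * \<alpha>)"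
proof -
  have "sb_primitive C c n mu (\<theta> + \<alpha>) - sb_primitive C c n mu (\<theta> - \<alpha>) =
      (cos_sum_primitive {1..C} c n mu (\<theta> + \<alpha>) - cos_sum_primitive {1..C} c n mu (\<theta> - \<alpha>)
       + 2 * sbA C c * \<alpha>) / sbB C c n"
    unfolding sb_primitive_def by (simp add: diff_divide_distrib[symmetric] algebra_simps)
  then show ?thesis
    unfolding cos_sum_primitive_diff_symmetric[OF finite_atLeastAtMost]
    by (simp add: algebra_simps add_divide_distrib)
qed

lemma circ_dist_le_iff_cos:
  assumes "0 \<le> \<alpha>" "\<alpha> \<le> pi"
  shows "circ_dist s t \<le> \<alpha> \<longleftrightarrow> cos \<alpha> \<le> cos (s - t)"
proof -
  have "circ_dist s t \<le> \<alpha> \<longleftrightarrow> arccos (cos (s - t)) \<le> arccos (cos \<alpha>)"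
    using assms by (simp add: circ_dist_def arccos_cos)
  also have "\<dots> \<longleftrightarrow> cos \<alpha> \<le> cos (s - t)"
    by (rule arccos_le_mono) auto
  finally show ?thesis .
qed

lemma cos_le_cos_iff_abs:
  assumes "0 \<le> \<alpha>" "\<alpha> \<le> pi" "\<bar>u\<bar> < 2 * pi"
  shows "cos \<alpha> \<le> cos u \<longleftrightarrow> \<bar>u\<bar> \<le> \<alpha> \<or> 2 * pi - \<alpha> \<le> \<bar>u\<bar>"
proof (cases "\<bar>u\<bar> \<le> pi")
  case True
  have "cos u = cos \<bar>u\<bar>" by (simp add: cos_abs_real)
  with True show ?thesis
    using assms cos_mono_le_eq[of \<alpha> "\<bar>u\<bar>"] by auto
next
  case False
  have "cos u = cos (2 * pi - \<bar>u\<bar>)"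
    by (simp add: cos_diff cos_abs_real)
  with False show ?thesis
    using assms cos_mono_le_eq[of \<alpha> "2 * pi - \<bar>u\<bar>"] by auto
qed

lemma circ_dist_add_period: "circ_dist (s + of_int k * (2 * pi)) t = circ_dist s t"
proof -
  have "cos (s + of_int k * (2 * pi) - t) = cos (s - t + of_int k * (2 * pi))"
    by (simp add: algebra_simps)
  also have "\<dots> = cos (s - t)"
    by (rule cos.plus_of_int[where 'a=real, simplified])
  finally show ?thesis
    unfolding circ_dist_def by simp
qed

lemma has_integral_wrapped_interval:
  fixes f F :: "real \<Rightarrow> real"
  assumes prim: "\<And>a b. a \<le> b \<Longrightarrow> (f has_integral F b - F a) {a..b}"
    and period: "\<And>x. F (x + 2 * pi) - F x = F pi - F (-pi)"
    and "u \<le> -pi" "-pi \<le> v" "v \<le> u + 2 * pi"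
  shows "(f has_integral F v - F u) ({-pi..v} \<union> {u + 2 * pi..pi})"
proof -
  have "(f has_integral (F v - F (-pi)) + (F pi - F (u + 2 * pi))) ({-pi..v} \<union> {u + 2 * pi..pi})"
  proof (rule has_integral_Un)
    show "(f has_integral F v - F (-pi)) {-pi..v}" "(f has_integral F pi - F (u + 2 * pi)) {u + 2 * pi..pi}"
      using assms by (auto intro: prim)
    show "negligible ({-pi..v} \<inter> {u + 2 * pi..pi})"
      by (rule negligible_subset[of "{v}"]) (use assms in auto)
  qed
  moreover have "F v - F (-pi) + (F pi - F (u + 2 * pi)) = F v - F u"
    using period[of u] by simp
  ultimately show ?thesis
    by simp
qed

lemma has_integral_circ_dist_ball:
  fixes f F :: "real \<Rightarrow> real"
  assumes prim: "\<And>a b. a \<le> b \<Longrightarrow> (f has_integral F b - F a) {a..b}"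
    and period: "\<And>x. F (x + 2 * pi) - F x = F pi - F (-pi)"
    and \<alpha>: "0 \<le> \<alpha>" "\<alpha> \<le> pi" and \<theta>: "-pi \<le> \<theta>" "\<theta> < pi"
  shows "(f has_integral F (\<theta> + \<alpha>) - F (\<theta> - \<alpha>)) ({t. circ_dist \<theta> t \<le> \<alpha>} \<inter> {-pi..<pi})"
proof -
  define P where "P t \<longleftrightarrow> -pi \<le> t \<and> t < pi \<and> (\<bar>\<theta> - t\<bar> \<le> \<alpha> \<or> 2 * pi - \<alpha> \<le> \<bar>\<theta> - t\<bar>)" for t
  have ball_eq: "{t. circ_dist \<theta> t \<le> \<alpha>} \<inter> {-pi..<pi} = {t. P t}"
    using \<theta> by (auto simp: P_def circ_dist_le_iff_cos[OF \<alpha>] cos_le_cos_iff_abs[OF \<alpha>])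
  have spike: "(f has_integral y) {t. P t}"
    if "(f has_integral y) W" "{t. P t} - W \<subseteq> {-pi, pi}" "W - {t. P t} \<subseteq> {-pi, pi}" for W y
  proof -
    have "negligible {x \<in> W - {t. P t}. f x \<noteq> 0}" "negligible {x \<in> {t. P t} - W. f x \<noteq> 0}"
      by (rule negligible_subset[of "{-pi, pi}"]; use that in blast)+
    with that(1) show ?thesis
      using has_integral_spike_set_eq by blast
  qed
  consider (inside) "-pi \<le> \<theta> - \<alpha>" "\<theta> + \<alpha> \<le> pi" | (left) "\<theta> - \<alpha> < -pi" | (right) "pi < \<theta> + \<alpha>"
    by linarith
  then have "(f has_integral F (\<theta> + \<alpha>) - F (\<theta> - \<alpha>)) {t. P t}"
  proof cases
    case inside
    show ?thesis
      by (rule spike[OF prim[of "\<theta> - \<alpha>" "\<theta> + \<alpha>"]]) (use inside \<alpha> \<theta> in \<open>auto simp: P_def\<close>)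
  next
    case left
    show ?thesis
      by (rule spike[OF has_integral_wrapped_interval[OF prim period, of "\<theta> - \<alpha>" "\<theta> + \<alpha>"]])
        (use left \<alpha> \<theta> in \<open>auto simp: P_def\<close>)
  next
    case right
    have "(f has_integral F (\<theta> + \<alpha> - 2 * pi) - F (\<theta> - \<alpha> - 2 * pi)) ({-pi..\<theta> + \<alpha> - 2 * pi} \<union> {\<theta> - \<alpha>..pi})"
      using has_integral_wrapped_interval[OF prim period, of "\<theta> - \<alpha> - 2 * pi" "\<theta> + \<alpha> - 2 * pi"] right \<alpha> \<theta>
      by simp
    moreover have "F (\<theta> + \<alpha> - 2 * pi) - F (\<theta> - \<alpha> - 2 * pi) = F (\<theta> + \<alpha>) - F (\<theta> - \<alpha>)"
      using period[of "\<theta> + \<alpha> - 2 * pi"] period[of "\<theta> - \<alpha> - 2 * pi"] by simp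
    ultimately show ?thesis
      by (intro spike) (use right \<alpha> \<theta> in \<open>auto simp: P_def\<close>)
  qed
  then show ?thesis
    unfolding ball_eq .
qed

lemma measure_density_indicator:
  fixes f :: "real \<Rightarrow> real"
  assumes "I \<in> sets borel" "S \<in> sets borel" "f \<in> borel_measurable borel" "\<And>t. 0 \<le> f t"
    and "(f has_integral v) (S \<inter> I)"
  shows "measure (density lborel (\<lambda>t. ennreal (indicator I t * f t))) S = v"
proof -
  have "emeasure (density lborel (\<lambda>t. ennreal (indicator I t * f t))) S =
      (\<integral>\<^sup>+ t\<in>S. ennreal (indicator I t * f t) \<partial>lborel)"
    by (rule emeasure_density) (use assms in auto)
  also have "\<dots> = (\<integral>\<^sup>+ t\<in>S \<inter> I. ennreal (f t) \<partial>lborel)"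
    by (intro nn_integral_cong) (auto simp: indicator_def)
  also have "\<dots> = ennreal v"
    by (rule nn_integral_has_integral_lebesgue') (use assms in auto)
  finally show ?thesis
    using has_integral_nonneg[OF assms(5)] assms(4) by (simp add: measure_def)
qed

lemma measure_sb_circ_dist_ball:
  assumes B: "sbB C c n > 0" and \<alpha>: "0 \<le> \<alpha>" "\<alpha> \<le> pi" and \<theta>: "-pi \<le> \<theta>" "\<theta> < pi"
  shows "measure (sb_measure C c n mu) {t. circ_dist \<theta> t \<le> \<alpha>} =
           sb_primitive C c n mu (\<theta> + \<alpha>) - sb_primitive C c n mu (\<theta> - \<alpha>)"
  unfolding sb_measure_def
proof (rule measure_density_indicator)
  have "{t. circ_dist \<theta> t \<le> \<alpha>} = {t. cos \<alpha> \<le> cos (\<theta> - t)}"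
    using circ_dist_le_iff_cos[OF \<alpha>] by auto
  then show "{t. circ_dist \<theta> t \<le> \<alpha>} \<in> sets borel"
    by simp
  show "sb C c n mu \<in> borel_measurable borel"
    unfolding sb_def by measurable
  show "(sb C c n mu has_integral sb_primitive C c n mu (\<theta> + \<alpha>) - sb_primitive C c n mu (\<theta> - \<alpha>))
      ({t. circ_dist \<theta> t \<le> \<alpha>} \<inter> {-pi..<pi})"
    using has_integral_sb sb_primitive_add_period sb_primitive_add_period[of C c n mu "-pi"] B \<alpha> \<theta>
    by (intro has_integral_circ_dist_ball) auto
qed (auto simp: sb_nonneg)

lemma principal_angleE:
  fixes \<theta> :: real
  obtains \<theta>' k where "-pi \<le> \<theta>'" "\<theta>' < pi" "\<theta> = \<theta>' + of_int k * (2 * pi)"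
proof -
  define k where "k = \<lfloor>(\<theta> + pi) / (2 * pi)\<rfloor>"
  have "of_int k \<le> (\<theta> + pi) / (2 * pi)" "(\<theta> + pi) / (2 * pi) < of_int k + 1"
    unfolding k_def by linarith+
  then have "of_int k * (2 * pi) \<le> \<theta> + pi" "\<theta> + pi < of_int k * (2 * pi) + 2 * pi"
    by (simp_all add: field_simps)
  then show ?thesis
    using that[of "\<theta> - of_int k * (2 * pi)" k] by simp
qed

definition exp_degree_formula :: "nat \<Rightarrow> nat \<Rightarrow> (nat \<Rightarrow> real) \<Rightarrow> (nat \<Rightarrow> nat) \<Rightarrow> (nat \<Rightarrow> real) \<Rightarrow> real \<Rightarrow> real \<Rightarrow> real" where
  "exp_degree_formula N C c n mu \<alpha> \<theta> =
     2 * real N / sbB C c n *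
       ((\<Sum>i\<in>{i\<in>{1..C}. n i \<noteq> 0}. c i / real (n i) * cos (real (n i) * (\<theta> - mu i)) * sin (real (n i) * \<alpha>))
        + ((\<Sum>i\<in>{i\<in>{1..C}. n i = 0}. c i) + sbA C c) * \<alpha>)"

lemma exp_degree_eq_formula:
  assumes B: "sbB C c n > 0" and \<alpha>: "0 \<le> \<alpha>" "\<alpha> \<le> pi"
  shows "exp_degree N C c n mu \<alpha> \<theta> = exp_degree_formula N C c n mu \<alpha> \<theta>"
proof -
  obtain \<theta>' k where \<theta>': "-pi \<le> \<theta>'" "\<theta>' < pi" and \<theta>_eq: "\<theta> = \<theta>' + of_int k * (2 * pi)"
    by (rule principal_angleE)
  have "cos (real m * (\<theta> - x)) = cos (real m * (\<theta>' - x))" for m x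
  proof -
    have "real m * (\<theta> - x) = real m * (\<theta>' - x) + of_int (int m * k) * (2 * pi)"
      unfolding \<theta>_eq by (simp add: algebra_simps)
    then show ?thesis
      using cos.plus_of_int[where 'a=real, simplified] by presburger
  qed
  moreover have "exp_degree N C c n mu \<alpha> \<theta> = exp_degree N C c n mu \<alpha> \<theta>'"
    unfolding exp_degree_def \<theta>_eq circ_dist_add_period ..
  ultimately show ?thesis
    unfolding exp_degree_def exp_degree_formula_def measure_sb_circ_dist_ball[OF B \<alpha> \<theta>']
      sb_primitive_diff_symmetric
    by simp
qed

lemma has_integral_cos_sum_affine_product:
  assumes "finite I" "finite J" and nonconstant: "\<And>i. i \<in> J \<Longrightarrow> n i \<noteq> 0"
  shows "((\<lambda>x. (cos_sum I a n mu x + p) * (cos_sum J b n mu x + q)) has_integral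
     pi * (\<Sum>i\<in>J. \<Sum>j\<in>{j\<in>I. n j = n i}. b i * a j * cos (real (n i) * (mu i - mu j)))
     + 2 * pi * q * ((\<Sum>i\<in>{i\<in>I. n i = 0}. a i) + p)) {-pi..pi}"
proof -
  have "{i\<in>J. n i = 0} = {}"
    using nonconstant by auto
  then have "(cos_sum J b n mu has_integral 0) {-pi..pi}"
    using has_integral_cos_sum[OF assms(2), of b n mu] by (simp only: sum.empty mult_zero_right)
  then have "((\<lambda>x. cos_sum I a n mu x * cos_sum J b n mu x + q * cos_sum I a n mu x
                + p * cos_sum J b n mu x + p * q) has_integral
      pi * (\<Sum>i\<in>J. \<Sum>j\<in>{j\<in>I. n j = n i}. b i * a j * cos (real (n i) * (mu i - mu j)))
      + q * (2 * pi * (\<Sum>i\<in>{i\<in>I. n i = 0}. a i)) + p * 0 + (pi - (-pi)) * (p * q)) {-pi..pi}"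
    using has_integral_const_real[of "p * q" "-pi" pi]
    by (intro has_integral_add has_integral_mult_right has_integral_cos_sum_times_cos_sum
              has_integral_cos_sum assms) auto
  then show ?thesis
    by (simp add: algebra_simps)
qed

lemma integral_density_indicator_interval:
  fixes f g :: "real \<Rightarrow> real"
  assumes "continuous_on UNIV f" "continuous_on UNIV g" "\<And>t. 0 \<le> f t"
  shows "integral\<^sup>L (density lborel (\<lambda>t. ennreal (indicator {a..<b} t * f t))) g =
           integral {a..b} (\<lambda>t. f t * g t)"
proof -
  have [measurable]: "f \<in> borel_measurable borel" "g \<in> borel_measurable borel"
    using assms by (auto intro: borel_measurable_continuous_onI)
  have "integral\<^sup>L (density lborel (\<lambda>t. ennreal (indicator {a..<b} t * f t))) g =
      integral\<^sup>L lborel (\<lambda>t. (indicator {a..<b} t * f t) *\<^sub>R g t)"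
    by (rule integral_density) (measurable, measurable, simp add: assms)
  also have "\<dots> = integral\<^sup>L lborel (\<lambda>t. indicator {a..b} t *\<^sub>R (f t * g t))"
    by (rule integral_cong_AE)
       (auto intro!: eventually_mono[OF AE_lborel_singleton[of b]] simp: indicator_def)
  also have "\<dots> = integral {a..b} (\<lambda>t. f t * g t)"
  proof -
    have "set_integrable lborel {a..b} (\<lambda>t. f t * g t)"
      unfolding set_integrable_def using assms
      by (intro borel_integrable_compact continuous_intros) (auto intro: continuous_on_subset)
    from set_borel_integral_eq_integral(2)[OF this] show ?thesis
      by (simp add: set_lebesgue_integral_def)
  qed
  finally show ?thesis .
qed

lemma has_integral_sb_times_exp_degree_formula:
  "((\<lambda>\<theta>. sb C c n mu \<theta> * exp_degree_formula N C c n mu \<alpha> \<theta>) has_integral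
     2 * pi * real N * \<alpha> / (sbB C c n)^2 *
       ((\<Sum>i\<in>{i\<in>{1..C}. n i \<noteq> 0}. \<Sum>j\<in>{j\<in>{1..C}. n j = n i}.
           c i * c j * cos (real (n i) * (mu i - mu j)) * (sin (real (n i) * \<alpha>) / (real (n i) * \<alpha>)))
        + 2 * ((\<Sum>i\<in>{i\<in>{1..C}. n i = 0}. c i) + sbA C c)^2)) {-pi..pi}"
proof -
  define I where "I = {1..C}"
  define J where "J = {i\<in>I. n i \<noteq> 0}"
  define D where "D = (\<Sum>i\<in>{i\<in>I. n i = 0}. c i) + sbA C c"
  define K where "K i = c i / real (n i) * sin (real (n i) * \<alpha>)" for i
  define S where "S = (\<Sum>i\<in>J. \<Sum>j\<in>{j\<in>I. n j = n i}.
           c i * c j * cos (real (n i) * (mu i - mu j)) * (sin (real (n i) * \<alpha>) / (real (n i) * \<alpha>)))"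
  have "exp_degree_formula N C c n mu \<alpha> \<theta> = 2 * real N / sbB C c n * (cos_sum J K n mu \<theta> + D * \<alpha>)" for \<theta>
    unfolding exp_degree_formula_def cos_sum_def K_def D_def J_def I_def by (simp add: mult_ac)
  then have integrand: "sb C c n mu \<theta> * exp_degree_formula N C c n mu \<alpha> \<theta>
      = 2 * real N / (sbB C c n)^2 * ((cos_sum I c n mu \<theta> + sbA C c) * (cos_sum J K n mu \<theta> + D * \<alpha>))" for \<theta>
    unfolding sb_eq_cos_sum I_def by (simp add: power2_eq_square)
  \<comment> \<open>At \<open>\<alpha> = 0\<close> both sides vanish, the sinc factor being the junk value \<open>0 / 0 = 0\<close>.\<close>
  have "K i * c j * cos (real (n i) * (mu i - mu j)) =
      \<alpha> * (c i * c j * cos (real (n i) * (mu i - mu j)) * (sin (real (n i) * \<alpha>) / (real (n i) * \<alpha>)))"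
    if "i \<in> J" for i j
    using that by (cases "\<alpha> = 0") (auto simp: K_def J_def)
  then have "(\<Sum>i\<in>J. \<Sum>j\<in>{j\<in>I. n j = n i}. K i * c j * cos (real (n i) * (mu i - mu j))) = \<alpha> * S"
    unfolding S_def sum_distrib_left by simp
  then have "((\<lambda>\<theta>. (cos_sum I c n mu \<theta> + sbA C c) * (cos_sum J K n mu \<theta> + D * \<alpha>)) has_integral
      pi * \<alpha> * (S + 2 * D^2)) {-pi..pi}"
    using has_integral_cos_sum_affine_product[of I J n c mu "sbA C c" K "D * \<alpha>"]
    unfolding D_def by (simp add: I_def J_def power2_eq_square algebra_simps)
  from has_integral_mult_right[OF this, of "2 * real N / (sbB C c n)^2"] show ?thesis
    unfolding integrand S_def D_def J_def I_def by (simp add: mult_ac)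
qed

lemma integral_exp_degree:
  assumes B: "sbB C c n > 0" and \<alpha>: "0 \<le> \<alpha>" "\<alpha> \<le> pi"
  shows "integral\<^sup>L (sb_measure C c n mu) (exp_degree N C c n mu \<alpha>) =
           2 * pi * real N * \<alpha> / (sbB C c n)^2 *
             ((\<Sum>i\<in>{i\<in>{1..C}. n i \<noteq> 0}. \<Sum>j\<in>{j\<in>{1..C}. n j = n i}.
                 c i * c j * cos (real (n i) * (mu i - mu j)) * (sin (real (n i) * \<alpha>) / (real (n i) * \<alpha>)))
              + 2 * ((\<Sum>i\<in>{i\<in>{1..C}. n i = 0}. c i) + sbA C c)^2)"
proof -
  have "integral\<^sup>L (sb_measure C c n mu) (exp_degree N C c n mu \<alpha>) =
      integral {-pi..pi} (\<lambda>\<theta>. sb C c n mu \<theta> * exp_degree_formula N C c n mu \<alpha> \<theta>)"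
    unfolding exp_degree_eq_formula[OF B \<alpha>, abs_def] sb_measure_def using B
    by (intro integral_density_indicator_interval sb_nonneg)
       (auto simp: sb_def exp_degree_formula_def intro!: continuous_intros)
  then show ?thesis
    using has_integral_sb_times_exp_degree_formula by (simp add: integral_unique)
qed

theorem proposition3:
  fixes N C :: nat and c mu :: "nat \<Rightarrow> real" and n :: "nat \<Rightarrow> nat" and \<alpha> :: real
  defines "A \<equiv> sbA C c" and "B \<equiv> sbB C c n"
  assumes B_pos: "B > 0"
    and alpha: "0 \<le> \<alpha>" "\<alpha> \<le> pi"
  shows "(\<forall>\<theta>\<in>{-pi..<pi}. exp_degree N C c n mu \<alpha> \<theta> =
           2 * real N / B *
             ((\<Sum>i\<in>{i\<in>{1..C}. n i \<noteq> 0}. c i / real (n i) * cos (real (n i) * (\<theta> - mu i))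
                 * sin (real (n i) * \<alpha>))
              + ((\<Sum>i\<in>{i\<in>{1..C}. n i = 0}. c i) + A) * \<alpha>)) \<and>
         integral\<^sup>L (sb_measure C c n mu) (\<lambda>\<theta>. exp_degree N C c n mu \<alpha> \<theta>) =
           2 * pi * real N * \<alpha> / B^2 *
             ((\<Sum>i\<in>{i\<in>{1..C}. n i \<noteq> 0}. \<Sum>j\<in>{j\<in>{1..C}. n j = n i}.
                 c i * c j * cos (real (n i) * (mu i - mu j)) * (sin (real (n i) * \<alpha>) / (real (n i) * \<alpha>)))
              + 2 * ((\<Sum>i\<in>{i\<in>{1..C}. n i = 0}. c i) + A)^2)"
  using B_pos alpha unfolding A_def B_def
  by (intro conjI ballI integral_exp_degree exp_degree_eq_formula[unfolded exp_degree_formula_def])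

end
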